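(* In the layer stripping setup (see context), with $\Theta(t):=\frac{1}{\sqrt{1+|t|^2}}\begin{pmatrix}1&-t\\\overline t&1\end{pmatrix}$ for $t\in\mathbb C$: (a) $a_{0,k}=a_{0,k-1}\sqrt{1+|\gamma_{k-1}|^2}$ for every $1\le k\le n$; in particular $a_{0,0}\le a_{0,1}\le\dots\le a_{0,n-1}$. (b) For every $0\le k\le n-1$: $\|G_k\Theta(\gamma_k)\|_2=\|G_k\|_2$ and $\|G_k\Theta(\gamma_k)\|_F=\|G_k\|_F=\|G_0\|_F=1$. (c) For every $0\le k\le n-2$: $\|G_{k+1}\|_1=\|G_k\Theta(\gamma_k)\|_1$. (d) $|a_{j,k}|\le1$ and $|b_{j,k}|\le1$ for all $0\le k\le n-1$, $0\le j\le n-k-1$. (e) $|\gamma_k|\le\Big(a_{0,0}\prod_{j=0}^{k-1}\sqrt{1+|\gamma_j|^2}\Big)^{-1}$ for every $0\le k\le n-1$.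
   Context: For a Laurent polynomial $a$, $a^*(z):=\overline{a(1/\overline z)}$. $\mathcal S$ is the set of pairs $(a,b)$ of Laurent polynomials with $aa^*+bb^*=1$ and $0<a^*(0)<\infty$; the NLFT is a bijection from compactly supported sequences $\mathbb Z\to\mathbb C$ onto $\mathcal S$, where the NLFT of $\boldsymbol\gamma$ supported in $[p,q]$ is $\prod_{k=p}^{q}\frac{1}{\sqrt{1+|\gamma_k|^2}}\begin{pmatrix}1&\gamma_k z^k\\-\overline{\gamma_k}z^{-k}&1\end{pmatrix}=\begin{pmatrix}a&b\\-b^*&a^*\end{pmatrix}$ (product ordered by increasing $k$). Layer stripping setup: let $n\ge1$ and $(a,b)\in\mathcal S$ with $b$ a polynomial of degree at most $n-1$. Set $a_0^*:=a^*$, $b_0:=b$, and for $k=0,\dots,n-1$ define recursively $\gamma_k:=b_k(0)/a_k^*(0)$, $a_{k+1}^*:=(a_k^*+\overline{\gamma_k}b_k)/\sqrt{1+|\gamma_k|^2}$, $b_{k+1}:=(b_k-\gamma_k a_k^* )/(z\sqrt{1+|\gamma_k|^2})$. (It is known that this is well defined, that $a_k^*,b_k$ are polynomials of degree at most $n-1-k$ with $a_k^*(0)>0$, that $a_n^*\equiv1$, $b_n\equiv0$, and that $(\gamma_0,\dots,\gamma_{n-1})$, extended by zero, is the unique sequence whose NLFT is $(a,b)$.) Write $a_k^*(z)=\sum_{j=0}^{n-1-k}a_{j,k}z^j$, $b_k(z)=\sum_{j=0}^{n-1-k}b_{j,k}z^j$, $\mathbf a_k:=(a_{0,k},\dots,a_{n-1-k,k})^T$,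 $\mathbf b_k:=(b_{0,k},\dots,b_{n-1-k,k})^T$ and $G_k:=(\mathbf a_k,\mathbf b_k)\in\mathbb C^{(n-k)\times2}$; conventions $a_{n-k,k}:=0$ for $0\le k\le n-1$ and $a_{0,n}:=1$. $\|\cdot\|_1,\|\cdot\|_2$ are induced matrix norms, $\|\cdot\|_F$ the Frobenius norm. *)

theory Defs
  imports Complex_Main "HOL-Library.Complex_Order" "Jordan_Normal_Form.Matrix"
begin

text \<open>A Laurent polynomial f(z) = sum_j f j z^j is represented by its coefficient
function f :: int => complex with finite support.\<close>

definition laurent :: "(int \<Rightarrow> complex) \<Rightarrow> bool" where
  "laurent f \<longleftrightarrow> finite {j. f j \<noteq> 0}"

text \<open>f^*(z) = conj (f (1 / conj z)); coefficientwise (f^*)_j = conj (f_(-j)).\<close>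
definition lstar :: "(int \<Rightarrow> complex) \<Rightarrow> int \<Rightarrow> complex" where
  "lstar f = (\<lambda>j. cnj (f (- j)))"

definition lmult :: "(int \<Rightarrow> complex) \<Rightarrow> (int \<Rightarrow> complex) \<Rightarrow> int \<Rightarrow> complex" where
  "lmult f g = (\<lambda>j. \<Sum>i\<in>{i. f i \<noteq> 0}. f i * g (j - i))"

definition lone :: "int \<Rightarrow> complex" where
  "lone = (\<lambda>j. if j = 0 then 1 else 0)"

text \<open>The class S: a a^* + b b^* = 1 and 0 < a^*(0) < infinity, i.e. a^* has no
negative powers (it is finite at 0) and its value at 0 is a positive real.\<close>
definition in_S :: "(int \<Rightarrow> complex) \<Rightarrow> (int \<Rightarrow> complex) \<Rightarrow> bool" where
  "in_S a b \<longleftrightarrow> laurent a \<and> laurent b \<and>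
     (\<lambda>j. lmult a (lstar a) j + lmult b (lstar b) j) = lone \<and>
     (\<forall>j<0. lstar a j = 0) \<and> 0 < lstar a 0"

definition poly_deg_le :: "(int \<Rightarrow> complex) \<Rightarrow> nat \<Rightarrow> bool" where
  "poly_deg_le f d \<longleftrightarrow> (\<forall>j. (j < 0 \<or> j > int d) \<longrightarrow> f j = 0)"

definition gam :: "(int \<Rightarrow> complex) \<Rightarrow> (int \<Rightarrow> complex) \<Rightarrow> complex" where
  "gam A B = B 0 / A 0"

text \<open>strip a b k = (a_k^*, b_k). Evaluation at 0 of a polynomial is its 0-th
coefficient; division by z shifts coefficients.\<close>
fun strip :: "(int \<Rightarrow> complex) \<Rightarrow> (int \<Rightarrow> complex) \<Rightarrow> nat \<Rightarrow> (int \<Rightarrow> complex) \<times> (int \<Rightarrow> complex)" where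
  "strip a b 0 = (lstar a, b)"
| "strip a b (Suc k) =
     (let A = fst (strip a b k); B = snd (strip a b k); g = gam A B;
          s = complex_of_real (sqrt (1 + (cmod g)\<^sup>2))
      in ((\<lambda>j. (A j + cnj g * B j) / s), (\<lambda>j. (B (j + 1) - g * A (j + 1)) / s)))"

definition astar :: "(int \<Rightarrow> complex) \<Rightarrow> (int \<Rightarrow> complex) \<Rightarrow> nat \<Rightarrow> int \<Rightarrow> complex" where
  "astar a b k = fst (strip a b k)"

definition bk :: "(int \<Rightarrow> complex) \<Rightarrow> (int \<Rightarrow> complex) \<Rightarrow> nat \<Rightarrow> int \<Rightarrow> complex" where
  "bk a b k = snd (strip a b k)"

definition gamma :: "(int \<Rightarrow> complex) \<Rightarrow> (int \<Rightarrow> complex) \<Rightarrow> nat \<Rightarrow> complex" where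
  "gamma a b k = gam (astar a b k) (bk a b k)"

definition Gmat :: "(int \<Rightarrow> complex) \<Rightarrow> (int \<Rightarrow> complex) \<Rightarrow> nat \<Rightarrow> nat \<Rightarrow> complex mat" where
  "Gmat a b n k = mat (n - k) 2
     (\<lambda>(i, j). if j = 0 then astar a b k (int i) else bk a b k (int i))"

definition Theta :: "complex \<Rightarrow> complex mat" where
  "Theta t = mat 2 2 (\<lambda>(i, j). complex_of_real (1 / sqrt (1 + (cmod t)\<^sup>2)) *
      (if i = 0 \<and> j = 0 then 1 else if i = 0 \<and> j = 1 then - t
       else if i = 1 \<and> j = 0 then cnj t else 1))"

definition vnorm1 :: "complex vec \<Rightarrow> real" where
  "vnorm1 v = (\<Sum>i<dim_vec v. cmod (v $ i))"

definition vnorm2 :: "complex vec \<Rightarrow> real" where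
  "vnorm2 v = sqrt (\<Sum>i<dim_vec v. (cmod (v $ i))\<^sup>2)"

definition opnorm1 :: "complex mat \<Rightarrow> real" where
  "opnorm1 A = Sup {vnorm1 (A *\<^sub>v x) | x. x \<in> carrier_vec (dim_col A) \<and> vnorm1 x = 1}"

definition opnorm2 :: "complex mat \<Rightarrow> real" where
  "opnorm2 A = Sup {vnorm2 (A *\<^sub>v x) | x. x \<in> carrier_vec (dim_col A) \<and> vnorm2 x = 1}"

definition frob :: "complex mat \<Rightarrow> real" where
  "frob A = sqrt (\<Sum>i<dim_row A. \<Sum>j<dim_col A. (cmod (A $$ (i, j)))\<^sup>2)"

end

theory Submission
  imports Defs
begin

text \<open>Coefficientwise, a_k a_k^* + b_k b_k^* = 1 says that the autocorrelations of the coefficient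
  sequences of a_k^* and b_k add up to the unit impulse. A stripping step multiplies the pair of
  sequences from the right by the unitary matrix Theta(gamma_k), which preserves this, and then
  divides the second one by z, which the choice of gamma_k makes possible; comparing top coefficients
  shows that the degree of a^* drops as well. At lag zero the identity reads ||G_k||_F = 1, which
  bounds all coefficients by 1, in particular |gamma_k| = |b_{0,k}| / a_{0,k} <= 1 / a_{0,k}. The norm
  statements follow from the unitarity of Theta(gamma_k) and from G_k Theta(gamma_k) being G_{k+1}
  padded by one zero in each column.\<close>

section \<open>Autocorrelation of coefficient sequences\<close>

lemma sum_support_cong:
  assumes "finite S" "finite T" "\<And>j. f j \<noteq> 0 \<Longrightarrow> j \<in> S" "\<And>j. f j \<noteq> 0 \<Longrightarrow> j \<in> T"
  shows "sum f S = sum f T"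
  by (rule sum.mono_neutral_cong) (use assms in auto)

definition autocorr :: "(int \<Rightarrow> complex) \<Rightarrow> int set \<Rightarrow> int \<Rightarrow> complex" where
  "autocorr f J d = (\<Sum>j\<in>J. f (j + d) * cnj (f j))"

lemma autocorr_support_cong:
  assumes "finite J" "finite K" "\<And>j. f j \<noteq> 0 \<Longrightarrow> j \<in> J \<and> j \<in> K"
  shows "autocorr f J d = autocorr f K d"
  unfolding autocorr_def by (rule sum_support_cong) (use assms in auto)

lemma autocorr_0: "autocorr f J 0 = of_real (\<Sum>j\<in>J. (cmod (f j))\<^sup>2)"
  unfolding autocorr_def by (simp add: complex_mult_cnj cmod_def)

lemma laurent_lstar: "laurent f \<Longrightarrow> laurent (lstar f)"
  unfolding laurent_def lstar_def
  using finite_vimage_IntI[of "{j. f j \<noteq> 0}" uminus UNIV] by (simp add: vimage_def)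

lemma lmult_lstar_eq_autocorr:
  assumes f: "laurent f" and J: "finite J" "\<And>j. f j \<noteq> 0 \<Longrightarrow> j \<in> J"
  shows "lmult f (lstar f) d = autocorr f J d"
proof -
  have fin: "finite {j. f (j + d) \<noteq> 0}"
    using finite_vimage_IntI[of "{j. f j \<noteq> 0}" "\<lambda>j. j + d" UNIV] f
    by (simp add: laurent_def vimage_def inj_on_def)
  have "lmult f (lstar f) d = (\<Sum>i\<in>{i. f i \<noteq> 0}. f i * cnj (f (i - d)))"
    unfolding lmult_def lstar_def by simp
  also have "\<dots> = (\<Sum>j\<in>{j. f (j + d) \<noteq> 0}. f (j + d) * cnj (f j))"
    by (rule sum.reindex_bij_witness[of _ "\<lambda>j. j + d" "\<lambda>i. i - d"]) auto
  also have "\<dots> = autocorr f J d"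
    unfolding autocorr_def by (rule sum_support_cong) (use fin J in auto)
  finally show ?thesis .
qed

lemma lmult_lstar_eq_autocorr_lstar:
  assumes f: "laurent f" and J: "finite J" "\<And>j. lstar f j \<noteq> 0 \<Longrightarrow> j \<in> J"
  shows "lmult f (lstar f) d = autocorr (lstar f) J d"
proof -
  have fin: "finite {j. lstar f j \<noteq> 0}"
    using laurent_lstar[OF f] unfolding laurent_def .
  have "lmult f (lstar f) d = (\<Sum>i\<in>{i. f i \<noteq> 0}. f i * cnj (f (i - d)))"
    unfolding lmult_def lstar_def by simp
  also have "\<dots> = (\<Sum>j\<in>{j. lstar f j \<noteq> 0}. lstar f (j + d) * cnj (lstar f j))"
    by (rule sum.reindex_bij_witness[of _ uminus uminus]) (auto simp: lstar_def)
  also have "\<dots> = autocorr (lstar f) J d"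
    unfolding autocorr_def by (rule sum_support_cong) (use fin J in auto)
  finally show ?thesis .
qed

lemma poly_deg_leD: "poly_deg_le f m \<Longrightarrow> f j \<noteq> 0 \<Longrightarrow> 0 \<le> j \<and> j \<le> int m"
  unfolding poly_deg_le_def by force

lemma poly_deg_leI: "(\<And>j. f j \<noteq> 0 \<Longrightarrow> 0 \<le> j \<and> j \<le> int m) \<Longrightarrow> poly_deg_le f m"
  unfolding poly_deg_le_def by force

lemma poly_deg_le_if_autocorr_vanishes:
  assumes finA: "finite {j. A j \<noteq> 0}" and A_nonneg: "\<And>j. A j \<noteq> 0 \<Longrightarrow> 0 \<le> j" and A0: "A 0 \<noteq> 0"
    and B: "poly_deg_le B m" and J: "finite J" "0 \<in> J"
    and vanish: "\<And>d. d > int m \<Longrightarrow> autocorr A J d + autocorr B J d = 0"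
  shows "poly_deg_le A m"
proof (rule poly_deg_leI, rule ccontr)
  fix j assume "A j \<noteq> 0" and "\<not> (0 \<le> j \<and> j \<le> int m)"
  define D where "D = Max {j. A j \<noteq> 0}"
  have D_max: "\<And>i. A i \<noteq> 0 \<Longrightarrow> i \<le> D" unfolding D_def using finA by auto
  have AD: "A D \<noteq> 0" unfolding D_def using finA \<open>A j \<noteq> 0\<close> Max_in[of "{j. A j \<noteq> 0}"] by auto
  have D: "D > int m" using D_max[OF \<open>A j \<noteq> 0\<close>] A_nonneg[OF \<open>A j \<noteq> 0\<close>] \<open>\<not> (0 \<le> j \<and> j \<le> int m)\<close> by simp
  let ?f = "\<lambda>j. A (j + D) * cnj (A j) + B (j + D) * cnj (B j)"
  \<comment> \<open>only the product of the top and the constant coefficient of A survives\<close>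
  have "autocorr A J D + autocorr B J D = sum ?f {0}"
    unfolding autocorr_def sum.distrib[symmetric]
  proof (rule sum_support_cong)
    fix i assume ne: "?f i \<noteq> 0"
    show "i \<in> {0}"
    proof (cases "A (i + D) * cnj (A i) = 0")
      case True
      then have "B (i + D) \<noteq> 0" "B i \<noteq> 0" using ne by auto
      then show ?thesis using poly_deg_leD[OF B, of "i + D"] poly_deg_leD[OF B, of i] D by simp
    next
      case False
      then have "A (i + D) \<noteq> 0" "A i \<noteq> 0" by auto
      then show ?thesis using D_max A_nonneg by fastforce
    qed
    then show "i \<in> J" using J by simp
  qed (use J in auto)
  also have "\<dots> = A D * cnj (A 0)" using poly_deg_leD[OF B, of D] D by force
  finally show False using vanish[OF D] AD A0 by simp
qed

text \<open>A A^* + B B^* = 1 for polynomials A, B of degree at most m, read off coefficientwise: the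
  coefficient of z^d on the left is the sum of the autocorrelations of A and B at lag d.\<close>
definition paraunitary :: "(int \<Rightarrow> complex) \<Rightarrow> (int \<Rightarrow> complex) \<Rightarrow> nat \<Rightarrow> bool" where
  "paraunitary A B m \<longleftrightarrow> poly_deg_le A m \<and> poly_deg_le B m \<and>
     (\<forall>d. autocorr A {0..int m} d + autocorr B {0..int m} d = (if d = 0 then 1 else 0))"

lemma paraunitary_lstar:
  assumes S: "in_S a b" and b: "poly_deg_le b m"
  shows "paraunitary (lstar a) b m"
proof -
  define A where "A = lstar a"
  define J where "J = {j. A j \<noteq> 0} \<union> {0..int m}"
  have a: "laurent a" and id: "\<And>d. lmult a (lstar a) d + lmult b (lstar b) d = lone d"
    and A_nonneg: "\<And>j. A j \<noteq> 0 \<Longrightarrow> 0 \<le> j" and A0: "A 0 \<noteq> 0"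
    using S unfolding in_S_def A_def by (auto dest: fun_cong simp: not_le[symmetric])
  have finA: "finite {j. A j \<noteq> 0}"
    using laurent_lstar[OF a] unfolding A_def laurent_def .
  have finJ: "finite J" unfolding J_def using finA by simp
  have b_laurent: "laurent b"
    unfolding laurent_def by (rule finite_subset[of _ "{0..int m}"]) (use poly_deg_leD[OF b] in auto)
  have autocorr_J: "autocorr A J d + autocorr b J d = (if d = 0 then 1 else 0)" for d
    using id[of d] lmult_lstar_eq_autocorr_lstar[OF a finJ, of d]
      lmult_lstar_eq_autocorr[OF b_laurent finJ, of d] poly_deg_leD[OF b]
    by (auto simp: A_def J_def lone_def)
  have A: "poly_deg_le A m"
    by (rule poly_deg_le_if_autocorr_vanishes[OF finA A_nonneg A0 b finJ])
      (use autocorr_J in \<open>auto simp: J_def\<close>)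
  have "autocorr f J d = autocorr f {0..int m} d" if "poly_deg_le f m" for f d
    by (rule autocorr_support_cong) (use finJ poly_deg_leD[OF that] in \<open>auto simp: J_def\<close>)
  then show ?thesis
    using A b autocorr_J unfolding paraunitary_def A_def by metis
qed

section \<open>Layer stripping\<close>

text \<open>The row vector (x, y) times Theta t is ((x + cnj t * y) / s, (y - t * x) / s).\<close>

lemma rotation_inner_eq:
  fixes x y u v t :: complex
  defines "s \<equiv> complex_of_real (sqrt (1 + (cmod t)\<^sup>2))"
  shows "(x + cnj t * y) / s * cnj ((u + cnj t * v) / s) + (y - t * x) / s * cnj ((v - t * u) / s)
    = x * cnj u + y * cnj v"
proof -
  have pos: "0 < 1 + (cmod t)\<^sup>2" by (simp add: add_pos_nonneg)
  then have s: "s \<noteq> 0" "cnj s = s" unfolding s_def by simp_all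
  have "s * s = of_real (1 + (cmod t)\<^sup>2)"
    unfolding s_def of_real_mult[symmetric] using pos by simp
  also have "\<dots> = 1 + t * cnj t" using complex_norm_square[of t] by simp
  finally have ss: "s * s = 1 + t * cnj t" .
  have "(x + cnj t * y) / s * cnj ((u + cnj t * v) / s) + (y - t * x) / s * cnj ((v - t * u) / s)
      = ((x + cnj t * y) * (cnj u + t * cnj v) + (y - t * x) * (cnj v - cnj t * cnj u)) / (s * s)"
    by (simp only: complex_cnj_divide s(2) times_divide_times_eq add_divide_distrib[symmetric]
        complex_cnj_add complex_cnj_diff complex_cnj_mult complex_cnj_cnj)
  also have "(x + cnj t * y) * (cnj u + t * cnj v) + (y - t * x) * (cnj v - cnj t * cnj u)
      = (s * s) * (x * cnj u + y * cnj v)"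
    unfolding ss by (simp add: algebra_simps)
  finally show ?thesis using s(1) by simp
qed

lemma autocorr_rotate:
  fixes t :: complex
  defines "s \<equiv> complex_of_real (sqrt (1 + (cmod t)\<^sup>2))"
  shows "autocorr (\<lambda>j. (A j + cnj t * B j) / s) J d + autocorr (\<lambda>j. (B j - t * A j) / s) J d
    = autocorr A J d + autocorr B J d"
  unfolding autocorr_def sum.distrib[symmetric] s_def by (rule sum.cong) (simp_all only: rotation_inner_eq)

lemma autocorr_shift: "autocorr (\<lambda>j. f (j + 1)) {0..int m} d = autocorr f {1..int m + 1} d"
  unfolding autocorr_def
  by (rule sum.reindex_bij_witness[of _ "\<lambda>j. j - 1" "\<lambda>j. j + 1"]) (auto simp: algebra_simps)

lemma astar_0: "astar a b 0 = lstar a"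
  unfolding astar_def by simp

lemma bk_0: "bk a b 0 = b"
  unfolding bk_def by simp

lemma gamma_eq: "gamma a b k = bk a b k 0 / astar a b k 0"
  unfolding gamma_def gam_def ..

lemma astar_Suc: "astar a b (Suc k) = (\<lambda>j. (astar a b k j + cnj (gamma a b k) * bk a b k j)
     / of_real (sqrt (1 + (cmod (gamma a b k))\<^sup>2)))"
  unfolding astar_def bk_def gamma_def by (simp add: Let_def)

lemma bk_Suc: "bk a b (Suc k) = (\<lambda>j. (bk a b k (j + 1) - gamma a b k * astar a b k (j + 1))
     / of_real (sqrt (1 + (cmod (gamma a b k))\<^sup>2)))"
  unfolding astar_def bk_def gamma_def by (simp add: Let_def)

lemma astar_Suc_coeff0:
  assumes pos: "0 < astar a b k 0"
  shows "astar a b (Suc k) 0 = astar a b k 0 * of_real (sqrt (1 + (cmod (gamma a b k))\<^sup>2))"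
proof -
  define r where "r = Re (astar a b k 0)"
  define B0 where "B0 = bk a b k 0"
  define s where "s = sqrt (1 + (cmod B0 / r)\<^sup>2)"
  have A0: "astar a b k 0 = of_real r" and r: "r > 0"
    using pos unfolding r_def by (auto simp: less_complex_def complex_eq_iff)
  have g: "gamma a b k = B0 / of_real r" and cmod_g: "cmod (gamma a b k) = cmod B0 / r"
    unfolding gamma_eq A0 B0_def using r by (simp_all add: norm_divide)
  have s: "s > 0" "s\<^sup>2 = 1 + (cmod B0 / r)\<^sup>2" unfolding s_def by (simp_all add: add_pos_nonneg)
  have "cnj B0 * B0 = of_real ((cmod B0)\<^sup>2)" using complex_norm_square[of B0] by (simp add: mult.commute)
  then have "of_real r + cnj (B0 / of_real r) * B0 = of_real (r + (cmod B0)\<^sup>2 / r)"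
    by simp
  also have "r + (cmod B0)\<^sup>2 / r = r * s * s"
    using s r by (simp add: power2_eq_square field_simps)
  finally show ?thesis
    unfolding astar_Suc cmod_g A0 B0_def[symmetric] s_def[symmetric] using s by (simp add: g)
qed

lemma paraunitary_if_autocorr_sum_eq:
  assumes A: "poly_deg_le A (Suc m)" and A0: "A 0 \<noteq> 0" and B: "poly_deg_le B m"
    and autocorr: "\<And>d. autocorr A {0..int m + 1} d + autocorr B {0..int m} d = (if d = 0 then 1 else 0)"
  shows "paraunitary A B m"
proof -
  have B_widen: "autocorr B {0..int m + 1} d = autocorr B {0..int m} d" for d
    by (rule autocorr_support_cong) (auto dest: poly_deg_leD[OF B])
  have A_m: "poly_deg_le A m"
  proof (rule poly_deg_le_if_autocorr_vanishes[where J = "{0..int m + 1}"])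
    show "finite {j. A j \<noteq> 0}"
      by (rule finite_subset[of _ "{0..int m + 1}"]) (auto dest: poly_deg_leD[OF A])
    show "autocorr A {0..int m + 1} d + autocorr B {0..int m + 1} d = 0" if "d > int m" for d
      using autocorr[of d] that unfolding B_widen by simp
  qed (use A0 B in \<open>auto dest: poly_deg_leD[OF A]\<close>)
  have A_narrow: "autocorr A {0..int m + 1} d = autocorr A {0..int m} d" for d
    by (rule autocorr_support_cong) (auto dest: poly_deg_leD[OF A_m])
  show ?thesis
    unfolding paraunitary_def using A_m B autocorr by (simp add: A_narrow)
qed

lemma paraunitary_strip_Suc:
  assumes pu: "paraunitary (astar a b k) (bk a b k) (Suc m)" and pos: "0 < astar a b k 0"
  shows "paraunitary (astar a b (Suc k)) (bk a b (Suc k)) m"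
proof -
  define A where "A = astar a b k"
  define B where "B = bk a b k"
  define g where "g = gamma a b k"
  define s where "s = complex_of_real (sqrt (1 + (cmod g)\<^sup>2))"
  define C where "C = (\<lambda>j. (B j - g * A j) / s)"
  have A'_eq: "astar a b (Suc k) = (\<lambda>j. (A j + cnj g * B j) / s)"
    unfolding A_def B_def g_def s_def astar_Suc ..
  have B'_eq: "bk a b (Suc k) = (\<lambda>j. C (j + 1))"
    unfolding C_def A_def B_def g_def s_def bk_Suc ..
  have A: "poly_deg_le A (Suc m)" and B: "poly_deg_le B (Suc m)"
    and autocorr_AB: "\<And>d. autocorr A {0..int m + 1} d + autocorr B {0..int m + 1} d = (if d = 0 then 1 else 0)"
    using pu unfolding paraunitary_def A_def B_def by (simp_all add: add.commute)
  have "A 0 \<noteq> 0" using pos unfolding A_def by auto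
  then have C0: "C 0 = 0" unfolding C_def g_def gamma_eq A_def[symmetric] B_def[symmetric] by simp
  have C_deg: "1 \<le> j \<and> j \<le> int m + 1" if "C j \<noteq> 0" for j
  proof -
    have "j \<noteq> 0" "A j \<noteq> 0 \<or> B j \<noteq> 0" using that C0 unfolding C_def by auto
    then show ?thesis using poly_deg_leD[OF A, of j] poly_deg_leD[OF B, of j] by auto
  qed
  show ?thesis
  proof (rule paraunitary_if_autocorr_sum_eq)
    show "poly_deg_le (astar a b (Suc k)) (Suc m)"
      by (rule poly_deg_leI) (use poly_deg_leD[OF A] poly_deg_leD[OF B] in \<open>force simp: A'_eq\<close>)
    have "0 < 1 + (cmod g)\<^sup>2" by (simp add: add_pos_nonneg)
    then show "astar a b (Suc k) 0 \<noteq> 0"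
      using astar_Suc_coeff0[OF pos] pos unfolding g_def by auto
    show "poly_deg_le (bk a b (Suc k)) m"
      by (rule poly_deg_leI) (use C_deg in \<open>force simp: B'_eq\<close>)
    have shift: "autocorr (bk a b (Suc k)) {0..int m} d = autocorr C {0..int m + 1} d" for d
      unfolding B'_eq autocorr_shift by (rule autocorr_support_cong) (auto dest: C_deg)
    show "autocorr (astar a b (Suc k)) {0..int m + 1} d + autocorr (bk a b (Suc k)) {0..int m} d
        = (if d = 0 then 1 else 0)" for d
      unfolding shift A'_eq C_def s_def using autocorr_rotate autocorr_AB by metis
  qed
qed

lemma astar_coeff0_pos:
  assumes "in_S a b"
  shows "0 < astar a b k 0"
proof (induction k)
  case 0
  show ?case using assms unfolding in_S_def astar_0 by blast
next
  case (Suc k)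
  have "0 < sqrt (1 + (cmod (gamma a b k))\<^sup>2)" by (simp add: add_pos_nonneg)
  then show ?case using Suc unfolding astar_Suc_coeff0[OF Suc] by (simp add: less_complex_def)
qed

lemma astar_coeff0_eq_prod:
  assumes "in_S a b"
  shows "astar a b k 0 = astar a b 0 0 * of_real (\<Prod>j<k. sqrt (1 + (cmod (gamma a b j))\<^sup>2))"
  by (induction k) (simp_all add: astar_Suc_coeff0[OF astar_coeff0_pos[OF assms]])

lemma paraunitary_astar_bk:
  assumes S: "in_S a b" and b: "poly_deg_le b m" and k: "k \<le> m"
  shows "paraunitary (astar a b k) (bk a b k) (m - k)"
  using k
proof (induction k)
  case 0
  show ?case unfolding astar_0 bk_0 using paraunitary_lstar[OF S b] by simp
next
  case (Suc k)
  then have "paraunitary (astar a b k) (bk a b k) (Suc (m - Suc k))"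
    by (simp add: Suc_diff_Suc)
  then show ?case by (rule paraunitary_strip_Suc[OF _ astar_coeff0_pos[OF S]])
qed

lemma paraunitary_energy:
  assumes "paraunitary A B m"
  shows "(\<Sum>j\<in>{0..int m}. (cmod (A j))\<^sup>2 + (cmod (B j))\<^sup>2) = 1"
proof -
  have "autocorr A {0..int m} 0 + autocorr B {0..int m} 0 = 1"
    using assms unfolding paraunitary_def by simp
  then show ?thesis unfolding autocorr_0 sum.distrib of_real_add[symmetric] by (simp only: of_real_eq_1_iff)
qed

lemma paraunitary_coeff_le_1:
  assumes pu: "paraunitary A B m"
  shows "cmod (A j) \<le> 1 \<and> cmod (B j) \<le> 1"
proof (cases "j \<in> {0..int m}")
  case True
  have "(cmod (A j))\<^sup>2 + (cmod (B j))\<^sup>2 \<le> (\<Sum>j\<in>{0..int m}. (cmod (A j))\<^sup>2 + (cmod (B j))\<^sup>2)"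
    by (rule member_le_sum[OF True]) simp_all
  then have "(cmod (A j))\<^sup>2 \<le> 1" "(cmod (B j))\<^sup>2 \<le> 1"
    unfolding paraunitary_energy[OF pu]
    using zero_le_power2[of "cmod (A j)"] zero_le_power2[of "cmod (B j)"] by linarith+
  then show ?thesis by (simp add: power_le_one_iff)
next
  case False
  then have "A j = 0" "B j = 0" using pu unfolding paraunitary_def poly_deg_le_def by auto
  then show ?thesis by simp
qed

lemma astar_coeff0_le_Suc:
  assumes "in_S a b"
  shows "astar a b k 0 \<le> astar a b (Suc k) 0"
proof -
  have pos: "0 < astar a b k 0" by (rule astar_coeff0_pos[OF assms])
  have "1 \<le> sqrt (1 + (cmod (gamma a b k))\<^sup>2)" by simp
  then have "Re (astar a b k 0) \<le> Re (astar a b k 0) * sqrt (1 + (cmod (gamma a b k))\<^sup>2)"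
    using pos by (simp add: less_complex_def)
  then show ?thesis
    unfolding astar_Suc_coeff0[OF pos] using pos by (simp add: less_eq_complex_def less_complex_def)
qed

lemma cmod_gamma_le:
  assumes S: "in_S a b" and b: "poly_deg_le b m" and k: "k \<le> m"
  shows "cmod (gamma a b k) \<le> 1 / Re (astar a b k 0)"
proof -
  have pos: "0 < astar a b k 0" by (rule astar_coeff0_pos[OF S])
  have "cmod (bk a b k 0) \<le> 1"
    using paraunitary_coeff_le_1[OF paraunitary_astar_bk[OF S b k]] by blast
  then show ?thesis
    using pos unfolding gamma_eq by (simp add: norm_divide cmod_eq_Re less_complex_def divide_right_mono)
qed

section \<open>The rotation Theta and induced matrix norms\<close>

lemma rotation_norm_eq:
  fixes x y t :: complex
  defines "s \<equiv> complex_of_real (sqrt (1 + (cmod t)\<^sup>2))"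
  shows "(cmod ((x + cnj t * y) / s))\<^sup>2 + (cmod ((y - t * x) / s))\<^sup>2 = (cmod x)\<^sup>2 + (cmod y)\<^sup>2"
proof -
  have "complex_of_real ((cmod ((x + cnj t * y) / s))\<^sup>2 + (cmod ((y - t * x) / s))\<^sup>2)
      = complex_of_real ((cmod x)\<^sup>2 + (cmod y)\<^sup>2)"
    unfolding of_real_add complex_norm_square s_def by (rule rotation_inner_eq)
  then show ?thesis by (simp only: of_real_eq_iff)
qed

lemma Theta_carrier: "Theta t \<in> carrier_mat 2 2"
  unfolding Theta_def by simp

lemma mult_Theta_index:
  fixes t :: complex
  assumes "M \<in> carrier_mat r 2" "i < r"
  defines "s \<equiv> complex_of_real (sqrt (1 + (cmod t)\<^sup>2))"
  shows "(M * Theta t) $$ (i, 0) = (M $$ (i, 0) + cnj t * M $$ (i, 1)) / s"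
    and "(M * Theta t) $$ (i, 1) = (M $$ (i, 1) - t * M $$ (i, 0)) / s"
  using assms
  by (auto simp: Theta_def scalar_prod_def numeral_2_eq_2 add_divide_distrib diff_divide_distrib algebra_simps)

lemma Theta_mult_vec_index:
  fixes t :: complex
  assumes "v \<in> carrier_vec 2"
  defines "s \<equiv> complex_of_real (sqrt (1 + (cmod t)\<^sup>2))"
  shows "(Theta t *\<^sub>v v) $ 0 = (v $ 0 - t * v $ 1) / s"
    and "(Theta t *\<^sub>v v) $ 1 = (v $ 1 + cnj t * v $ 0) / s"
  using assms
  by (auto simp: Theta_def scalar_prod_def numeral_2_eq_2 add_divide_distrib diff_divide_distrib algebra_simps)

lemma Theta_mult_Theta_uminus: "Theta t * Theta (- t) = 1\<^sub>m 2"
proof -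
  have pos: "0 < 1 + cmod t * cmod t" by (simp add: add_pos_nonneg)
  have ss: "complex_of_real (sqrt (1 + cmod t * cmod t)) * complex_of_real (sqrt (1 + cmod t * cmod t))
      = 1 + t * cnj t"
    unfolding of_real_mult[symmetric] using pos complex_norm_square[of t] by (simp add: power2_eq_square)
  have nz: "1 + t * cnj t \<noteq> 0" using pos unfolding ss[symmetric] by simp
  show ?thesis
    by (intro eq_matI)
      (auto simp: Theta_def scalar_prod_def numeral_2_eq_2 less_Suc_eq algebra_simps
        add_divide_distrib[symmetric] ss nz)
qed

lemma transpose_Theta: "transpose_mat (Theta t) = Theta (- cnj t)"
  by (intro eq_matI) (auto simp: Theta_def numeral_2_eq_2 less_Suc_eq)

lemma sum_lessThan_2: "(\<Sum>i<(2::nat). f i) = f 0 + (f 1 :: 'a :: comm_monoid_add)"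
  by (simp add: numeral_2_eq_2)

lemma vnorm2_Theta_mult_vec:
  assumes v: "v \<in> carrier_vec 2"
  shows "vnorm2 (Theta t *\<^sub>v v) = vnorm2 v"
proof -
  define s where "s = complex_of_real (sqrt (1 + (cmod t)\<^sup>2))"
  have d: "dim_vec (Theta t *\<^sub>v v) = 2" "dim_vec v = 2" using v Theta_carrier[of t] by auto
  have "vnorm2 (Theta t *\<^sub>v v) = sqrt ((cmod ((v $ 0 - t * v $ 1) / s))\<^sup>2 + (cmod ((v $ 1 + cnj t * v $ 0) / s))\<^sup>2)"
    unfolding vnorm2_def d sum_lessThan_2 Theta_mult_vec_index[OF v] s_def ..
  also have "\<dots> = sqrt ((cmod (v $ 0))\<^sup>2 + (cmod (v $ 1))\<^sup>2)"
    using rotation_norm_eq[of "v $ 1" t "v $ 0"] unfolding s_def by (metis add.commute)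
  also have "\<dots> = vnorm2 v"
    unfolding vnorm2_def d sum_lessThan_2 ..
  finally show ?thesis .
qed

lemma opnorm2_mult_isometry:
  assumes M: "M \<in> carrier_mat r d" and U: "U \<in> carrier_mat d d" and V: "V \<in> carrier_mat d d"
    and UV: "U * V = 1\<^sub>m d" and iso: "\<And>v. v \<in> carrier_vec d \<Longrightarrow> vnorm2 (U *\<^sub>v v) = vnorm2 v"
  shows "opnorm2 (M * U) = opnorm2 M"
proof -
  have "{vnorm2 ((M * U) *\<^sub>v x) | x. x \<in> carrier_vec d \<and> vnorm2 x = 1}
      = {vnorm2 (M *\<^sub>v y) | y. y \<in> carrier_vec d \<and> vnorm2 y = 1}" (is "?L = ?R")
  proof
    show "?L \<subseteq> ?R"
    proof
      fix r assume "r \<in> ?L"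
      then obtain x where x: "x \<in> carrier_vec d" "vnorm2 x = 1" and r: "r = vnorm2 (M *\<^sub>v (U *\<^sub>v x))"
        using M U by auto
      show "r \<in> ?R" unfolding r using x U iso by fastforce
    qed
  next
    show "?R \<subseteq> ?L"
    proof
      fix r assume "r \<in> ?R"
      then obtain y where y: "y \<in> carrier_vec d" "vnorm2 y = 1" and r: "r = vnorm2 (M *\<^sub>v y)"
        by auto
      have UVy: "U *\<^sub>v (V *\<^sub>v y) = y"
        using y(1) U V by (simp add: UV assoc_mult_mat_vec[symmetric])
      have Vy: "V *\<^sub>v y \<in> carrier_vec d" "vnorm2 (V *\<^sub>v y) = 1"
        using V y iso[of "V *\<^sub>v y"] UVy by auto
      show "r \<in> ?L" unfolding r using M U Vy UVy by (metis (mono_tags, lifting) assoc_mult_mat_vec mem_Collect_eq)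
    qed
  qed
  then show ?thesis unfolding opnorm2_def using M U by simp
qed

lemma frob_eq_sqrt_sum_row_norms: "frob M = sqrt (\<Sum>i<dim_row M. (vnorm2 (row M i))\<^sup>2)"
  unfolding frob_def vnorm2_def by (simp add: sum_nonneg)

lemma row_mult_eq_transpose_mult_vec:
  fixes M U :: "'a :: comm_semiring_0 mat"
  assumes "M \<in> carrier_mat r d" "U \<in> carrier_mat d d" "i < r"
  shows "row (M * U) i = transpose_mat U *\<^sub>v row M i"
  using assms by (intro eq_vecI) (auto simp: comm_scalar_prod[of "row M i" d])

lemma frob_mult_isometry:
  assumes M: "M \<in> carrier_mat r d" and U: "U \<in> carrier_mat d d"
    and iso: "\<And>v. v \<in> carrier_vec d \<Longrightarrow> vnorm2 (transpose_mat U *\<^sub>v v) = vnorm2 v"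
  shows "frob (M * U) = frob M"
  unfolding frob_eq_sqrt_sum_row_norms using M U
  by (auto intro!: arg_cong[where f = sqrt] sum.cong simp: row_mult_eq_transpose_mult_vec iso simp del: row_mult)

definition abs_col_sum :: "complex mat \<Rightarrow> nat \<Rightarrow> real" where
  "abs_col_sum M j = (\<Sum>i<dim_row M. cmod (M $$ (i, j)))"

lemma vnorm1_mult_vec_le:
  assumes x: "x \<in> carrier_vec (dim_col M)"
  shows "vnorm1 (M *\<^sub>v x) \<le> (\<Sum>j<dim_col M. cmod (x $ j) * abs_col_sum M j)"
proof -
  have "vnorm1 (M *\<^sub>v x) = (\<Sum>i<dim_row M. cmod (\<Sum>j<dim_col M. M $$ (i, j) * x $ j))"
    unfolding vnorm1_def using x by (simp add: scalar_prod_def atLeast0LessThan)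
  also have "\<dots> \<le> (\<Sum>i<dim_row M. \<Sum>j<dim_col M. cmod (M $$ (i, j)) * cmod (x $ j))"
    by (rule sum_mono, rule order_trans[OF norm_sum]) (simp add: norm_mult)
  also have "\<dots> = (\<Sum>j<dim_col M. cmod (x $ j) * abs_col_sum M j)"
    unfolding abs_col_sum_def by (subst sum.swap) (simp add: sum_distrib_left mult.commute)
  finally show ?thesis .
qed

lemma opnorm1_eq_Max_abs_col_sum:
  assumes d: "0 < dim_col M"
  shows "opnorm1 M = Max (abs_col_sum M ` {..<dim_col M})"
proof -
  define C where "C = Max (abs_col_sum M ` {..<dim_col M})"
  let ?X = "{vnorm1 (M *\<^sub>v x) | x. x \<in> carrier_vec (dim_col M) \<and> vnorm1 x = 1}"
  have C_ge: "abs_col_sum M j \<le> C" if "j < dim_col M" for j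
    unfolding C_def using that by simp
  have "C \<in> abs_col_sum M ` {..<dim_col M}"
    unfolding C_def using d by (intro Max_in) auto
  then obtain j0 where j0: "j0 < dim_col M" "abs_col_sum M j0 = C"
    by auto
  have "vnorm1 (M *\<^sub>v unit_vec (dim_col M) j0) = C"
    unfolding vnorm1_def j0(2)[symmetric] abs_col_sum_def using j0(1) by simp
  moreover have "vnorm1 (unit_vec (dim_col M) j0) = 1"
    unfolding vnorm1_def using j0(1) by (simp add: if_distrib[of cmod] cong: if_cong)
  ultimately have "C \<in> ?X" using unit_vec_carrier by blast
  moreover have "r \<le> C" if rX: "r \<in> ?X" for r
  proof -
    obtain x where x: "x \<in> carrier_vec (dim_col M)" "vnorm1 x = 1" and r: "r = vnorm1 (M *\<^sub>v x)"
      using rX by auto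
    have "r \<le> (\<Sum>j<dim_col M. cmod (x $ j) * abs_col_sum M j)"
      unfolding r by (rule vnorm1_mult_vec_le[OF x(1)])
    also have "\<dots> \<le> (\<Sum>j<dim_col M. cmod (x $ j) * C)"
      by (intro sum_mono mult_left_mono C_ge) auto
    also have "\<dots> = C"
      using x unfolding vnorm1_def by (simp add: sum_distrib_right[symmetric])
    finally show ?thesis .
  qed
  ultimately show ?thesis unfolding opnorm1_def C_def[symmetric] by (rule cSup_eq_maximum)
qed

lemma opnorm1_eq_if_abs_col_sum_eq:
  assumes "dim_col M = dim_col N" "0 < dim_col N"
    and "\<And>j. j < dim_col N \<Longrightarrow> abs_col_sum M j = abs_col_sum N j"
  shows "opnorm1 M = opnorm1 N"
  using assms by (simp add: opnorm1_eq_Max_abs_col_sum)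

lemma Gmat_dims: "dim_row (Gmat a b n k) = n - k" "dim_col (Gmat a b n k) = 2"
  unfolding Gmat_def by simp_all

lemma Gmat_carrier: "Gmat a b n k \<in> carrier_mat (n - k) 2"
  unfolding Gmat_def by simp

lemma Gmat_index:
  assumes "i < n - k" "j < 2"
  shows "Gmat a b n k $$ (i, j) = (if j = 0 then astar a b k (int i) else bk a b k (int i))"
  using assms unfolding Gmat_def by simp

lemma Gmat_mult_Theta_gamma_index:
  assumes "i < n - k"
  shows "(Gmat a b n k * Theta (gamma a b k)) $$ (i, 0) = astar a b (Suc k) (int i)"
    and "(Gmat a b n k * Theta (gamma a b k)) $$ (i, 1) = bk a b (Suc k) (int i - 1)"
proof -
  have "Gmat a b n k $$ (i, 0) = astar a b k (int i)" "Gmat a b n k $$ (i, 1) = bk a b k (int i)"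
    using Gmat_index[OF assms] by simp_all
  then show "(Gmat a b n k * Theta (gamma a b k)) $$ (i, 0) = astar a b (Suc k) (int i)"
    and "(Gmat a b n k * Theta (gamma a b k)) $$ (i, 1) = bk a b (Suc k) (int i - 1)"
    unfolding mult_Theta_index[OF Gmat_carrier assms] astar_Suc bk_Suc by simp_all
qed

lemma sum_lessThan_Suc_int: "(\<Sum>i<Suc m. f (int i)) = (\<Sum>j\<in>{0..int m}. f j)"
  by (rule sum.reindex_bij_witness[of _ nat int]) auto

lemma frob_Gmat:
  assumes S: "in_S a b" and b: "poly_deg_le b (n - 1)" and k: "k < n"
  shows "frob (Gmat a b n k) = 1"
proof -
  have pu: "paraunitary (astar a b k) (bk a b k) (n - 1 - k)"
    using paraunitary_astar_bk[OF S b] k by simp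
  have rows: "n - k = Suc (n - 1 - k)" using k by simp
  have "frob (Gmat a b n k) = sqrt (\<Sum>i<n - k. (cmod (astar a b k (int i)))\<^sup>2 + (cmod (bk a b k (int i)))\<^sup>2)"
    unfolding frob_def Gmat_dims sum_lessThan_2 by (intro arg_cong[where f = sqrt] sum.cong) (simp_all add: Gmat_index)
  also have "\<dots> = sqrt (\<Sum>j\<in>{0..int (n - 1 - k)}. (cmod (astar a b k j))\<^sup>2 + (cmod (bk a b k j))\<^sup>2)"
    unfolding rows by (subst sum_lessThan_Suc_int[symmetric]) (rule refl)
  also have "\<dots> = 1"
    unfolding paraunitary_energy[OF pu] by simp
  finally show ?thesis .
qed

text \<open>G_k Theta(gamma_k) is G_{k+1} with a zero appended to its first column and prepended to its
  second.\<close>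

lemma abs_col_sum_Gmat_mult_Theta_gamma:
  assumes S: "in_S a b" and b: "poly_deg_le b (n - 1)" and k: "k + 2 \<le> n" and j: "j < 2"
  shows "abs_col_sum (Gmat a b n k * Theta (gamma a b k)) j = abs_col_sum (Gmat a b n (Suc k)) j"
proof -
  define N where "N = n - Suc k"
  have N: "n - k = Suc N" "1 \<le> N" using k unfolding N_def by auto
  have "paraunitary (astar a b (Suc k)) (bk a b (Suc k)) (N - 1)"
    using paraunitary_astar_bk[OF S b, of "Suc k"] k unfolding N_def by (simp add: diff_diff_add)
  then have top: "astar a b (Suc k) (int N) = 0" and bottom: "bk a b (Suc k) (- 1) = 0"
    using N(2) unfolding paraunitary_def poly_deg_le_def by auto
  let ?G = "Gmat a b n k * Theta (gamma a b k)"
  have G_dims: "dim_row ?G = Suc N" "dim_col ?G = 2"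
    using Gmat_dims[of a b n k] Theta_carrier N by auto
  have "abs_col_sum ?G 0 = (\<Sum>i<Suc N. cmod (astar a b (Suc k) (int i)))"
    unfolding abs_col_sum_def G_dims
    by (intro sum.cong) (simp_all add: Gmat_mult_Theta_gamma_index N)
  also have "\<dots> = abs_col_sum (Gmat a b n (Suc k)) 0"
    unfolding abs_col_sum_def Gmat_dims N_def[symmetric] using top
    by (simp, intro sum.cong) (simp_all add: Gmat_index N_def)
  finally have col0: "abs_col_sum ?G 0 = abs_col_sum (Gmat a b n (Suc k)) 0" .
  have "abs_col_sum ?G 1 = (\<Sum>i<Suc N. cmod (bk a b (Suc k) (int i - 1)))"
    unfolding abs_col_sum_def G_dims
    by (intro sum.cong) (use Gmat_mult_Theta_gamma_index(2)[of _ n k a b] N in auto)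
  also have "\<dots> = (\<Sum>i<N. cmod (bk a b (Suc k) (int i)))"
    by (subst sum.lessThan_Suc_shift) (simp add: bottom)
  also have "\<dots> = abs_col_sum (Gmat a b n (Suc k)) 1"
    unfolding abs_col_sum_def Gmat_dims N_def[symmetric]
    by (intro sum.cong) (simp_all add: Gmat_index N_def)
  finally have col1: "abs_col_sum ?G 1 = abs_col_sum (Gmat a b n (Suc k)) 1" .
  show ?thesis using col0 col1 j by (auto simp: less_2_cases_iff)
qed

lemma opnorm1_Gmat_Suc:
  assumes S: "in_S a b" and b: "poly_deg_le b (n - 1)" and k: "k + 2 \<le> n"
  shows "opnorm1 (Gmat a b n (k + 1)) = opnorm1 (Gmat a b n k * Theta (gamma a b k))"
  using abs_col_sum_Gmat_mult_Theta_gamma[OF S b k]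
  by (intro opnorm1_eq_if_abs_col_sum_eq) (simp_all add: Gmat_dims carrier_matD[OF Theta_carrier])

theorem lemma4p1:
  fixes a b :: "int \<Rightarrow> complex" and n :: nat
  assumes n: "n \<ge> 1"
    and S: "in_S a b"
    and bdeg: "poly_deg_le b (n - 1)"
  shows
    "((\<forall>k\<in>{1..n}. astar a b k 0 =
        astar a b (k - 1) 0 * complex_of_real (sqrt (1 + (cmod (gamma a b (k - 1)))\<^sup>2)))
     \<and> (\<forall>k. k + 1 \<le> n - 1 \<longrightarrow> astar a b k 0 \<le> astar a b (k + 1) 0))
    \<and> (\<forall>k<n. opnorm2 (Gmat a b n k * Theta (gamma a b k)) = opnorm2 (Gmat a b n k)
        \<and> frob (Gmat a b n k * Theta (gamma a b k)) = frob (Gmat a b n k)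
        \<and> frob (Gmat a b n k) = frob (Gmat a b n 0)
        \<and> frob (Gmat a b n 0) = 1)
    \<and> (\<forall>k. k + 2 \<le> n \<longrightarrow> opnorm1 (Gmat a b n (k + 1)) = opnorm1 (Gmat a b n k * Theta (gamma a b k)))
    \<and> (\<forall>k<n. \<forall>j<n - k. cmod (astar a b k (int j)) \<le> 1 \<and> cmod (bk a b k (int j)) \<le> 1)
    \<and> (\<forall>k<n. cmod (gamma a b k) \<le>
        1 / (Re (astar a b 0 0) * (\<Prod>j<k. sqrt (1 + (cmod (gamma a b j))\<^sup>2))))"
proof -
  have coeff0_step: "astar a b k 0 = astar a b (k - 1) 0 * of_real (sqrt (1 + (cmod (gamma a b (k - 1)))\<^sup>2))"
    if "k \<ge> 1" for k
    using astar_Suc_coeff0[OF astar_coeff0_pos[OF S], of "k - 1"] that by simp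
  have opnorm2_eq: "opnorm2 (Gmat a b n k * Theta t) = opnorm2 (Gmat a b n k)" for k t
    by (rule opnorm2_mult_isometry[OF Gmat_carrier Theta_carrier Theta_carrier Theta_mult_Theta_uminus
        vnorm2_Theta_mult_vec])
  have frob_eq: "frob (Gmat a b n k * Theta t) = frob (Gmat a b n k)" for k t
    by (rule frob_mult_isometry[OF Gmat_carrier Theta_carrier]) (simp add: transpose_Theta vnorm2_Theta_mult_vec)
  have coeff_le_1: "cmod (astar a b k j) \<le> 1 \<and> cmod (bk a b k j) \<le> 1" if "k < n" for k j
    using paraunitary_coeff_le_1[OF paraunitary_astar_bk[OF S bdeg]] that by simp
  have gamma_le: "cmod (gamma a b k) \<le> 1 / (Re (astar a b 0 0) * (\<Prod>j<k. sqrt (1 + (cmod (gamma a b j))\<^sup>2)))"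
    if "k < n" for k
    using cmod_gamma_le[OF S bdeg, of k] that unfolding astar_coeff0_eq_prod[OF S, of k]
    by (simp del: of_real_prod)
  show ?thesis
    using coeff0_step astar_coeff0_le_Suc[OF S] opnorm2_eq frob_eq frob_Gmat[OF S bdeg]
      opnorm1_Gmat_Suc[OF S bdeg] coeff_le_1 gamma_le n
    by simp
qed

end
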